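(* Let $\mathcal{G}$ be a finite weighted coloured--edge graph with $n\ge2$ vertices and $k$ colours such that for every ordered pair of vertices $(x,y)$ and every colour $c$ there is at most one edge from $x$ to $y$ of colour $c$. Then for any vertices $u\ne v$, the number of minimal paths from $u$ to $v$ (counting all of them, including distinct paths with equal weight vectors) is at most $k(k+1)^{n-2}$.
   Context: A weighted coloured--edge graph $\mathcal{G}=\langle V,E,\omega,\lambda\rangle$ consists of a directed multigraph with vertex set $V$ and edge set $E$ (each edge $e$ has an initial vertex and a distinct terminal vertex), a weight function $\omega:E\to\mathbb{R}^+$ (strictly positive reals), and a surjective colour function $\lambda:E\to M$ onto a set $M$ of colours; $k=|M|$. A path from $u$ to $v$ is a sequence of edges $e_1,\dots,e_l$ ($l\ge1$) such that the initial vertex of $e_1$ is $u$, the terminal vertex of $e_l$ is $v$, the terminal vertex of $e_i$ is the initial vertex of $e_{i+1}$, and no vertex is visited twice. For a path $p$ and colour $c$, $\omega_c(p)$ is the sum of $\omega(e)$ over edges $e$ of $p$ with $\lambda(e)=c$. For paths $p,q$ from $u$ to $v$, $p\le q$ means $\omega_c(p)\le\omega_c(q)$ for all $c\in M$. A path $p$ from $u$ to $v$ is minimal if there is no path $q$ from $u$ to $v$ with $q\le p$ and $\omega_c(q)<\omega_c(p)$ for some colour $c$. *)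

theory Defs
  imports Complex_Main
begin

definition wc_graph ::
  "'v set \<Rightarrow> 'e set \<Rightarrow> ('e \<Rightarrow> 'v) \<Rightarrow> ('e \<Rightarrow> 'v) \<Rightarrow> ('e \<Rightarrow> real) \<Rightarrow> ('e \<Rightarrow> 'c) \<Rightarrow> 'c set \<Rightarrow> bool"
where
  "wc_graph V E src tgt w col M \<longleftrightarrow>
     (\<forall>e\<in>E. src e \<in> V \<and> tgt e \<in> V \<and> src e \<noteq> tgt e \<and> w e > 0) \<and> col ` E = M"

definition finite_wc_graph ::
  "'v set \<Rightarrow> 'e set \<Rightarrow> ('e \<Rightarrow> 'v) \<Rightarrow> ('e \<Rightarrow> 'v) \<Rightarrow> ('e \<Rightarrow> real) \<Rightarrow> ('e \<Rightarrow> 'c) \<Rightarrow> 'c set \<Rightarrow> bool"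
where
  "finite_wc_graph V E src tgt w col M \<longleftrightarrow> wc_graph V E src tgt w col M \<and> finite V \<and> finite E"

definition is_path ::
  "'e set \<Rightarrow> ('e \<Rightarrow> 'v) \<Rightarrow> ('e \<Rightarrow> 'v) \<Rightarrow> 'v \<Rightarrow> 'v \<Rightarrow> 'e list \<Rightarrow> bool"
where
  "is_path E src tgt u v p \<longleftrightarrow>
     p \<noteq> [] \<and> set p \<subseteq> E \<and> src (hd p) = u \<and> tgt (last p) = v \<and>
     (\<forall>i. Suc i < length p \<longrightarrow> tgt (p ! i) = src (p ! Suc i)) \<and>
     distinct (src (hd p) # map tgt p)"

definition colour_weight :: "('e \<Rightarrow> real) \<Rightarrow> ('e \<Rightarrow> 'c) \<Rightarrow> 'c \<Rightarrow> 'e list \<Rightarrow> real"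
where
  "colour_weight w col c p = sum_list (map w (filter (\<lambda>e. col e = c) p))"

definition path_le :: "('e \<Rightarrow> real) \<Rightarrow> ('e \<Rightarrow> 'c) \<Rightarrow> 'c set \<Rightarrow> 'e list \<Rightarrow> 'e list \<Rightarrow> bool"
where
  "path_le w col M p q \<longleftrightarrow> (\<forall>c\<in>M. colour_weight w col c p \<le> colour_weight w col c q)"

definition minimal_path ::
  "'e set \<Rightarrow> ('e \<Rightarrow> 'v) \<Rightarrow> ('e \<Rightarrow> 'v) \<Rightarrow> ('e \<Rightarrow> real) \<Rightarrow> ('e \<Rightarrow> 'c) \<Rightarrow> 'c set \<Rightarrow> 'v \<Rightarrow> 'v \<Rightarrow> 'e list \<Rightarrow> bool"
where
  "minimal_path E src tgt w col M u v p \<longleftrightarrow>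
     is_path E src tgt u v p \<and>
     \<not> (\<exists>q. is_path E src tgt u v q \<and> path_le w col M q p \<and>
            (\<exists>c\<in>M. colour_weight w col c q < colour_weight w col c p))"

end

theory Submission
  imports Defs "HOL-Library.FuncSet"
begin

(* Record for a path p its entry colours: the partial map sending
   each vertex z entered by p to the colour of the edge of p that enters z.  For a
   minimal path from u to v this map is defined at v, undefined at u and outside V,
   and takes values in M, so it lies in a set of size k (k+1)^(n-2).  The theorem thus
   follows once minimal paths are shown to be determined by their entry colours.
   This is proved by induction on the length, peeling off last edges:
   if two minimal paths p1 @ [e] and q1 @ [e'] have the same entry colours, then e and e'
   have the same colour and target; if their sources differed, the source of the lighter
   edge lies on the other path, and following that path only up to this vertex and then
   taking the lighter edge cuts out a nonempty detour, hence strictly dominates it, as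
   weights are positive.  So src e = src e', hence e = e' as parallel edges
   of equal colour coincide, and the prefixes are again minimal paths with equal entry
   colours. *)

section \<open>Paths\<close>

text \<open>The path condition with consecutiveness phrased by successively, which
  decomposes well along appended lists.\<close>
lemma is_path_iff:
  "is_path E src tgt u v p \<longleftrightarrow> p \<noteq> [] \<and> set p \<subseteq> E \<and> src (hd p) = u \<and> tgt (last p) = v
     \<and> successively (\<lambda>a b. tgt a = src b) p \<and> distinct (u # map tgt p)"
  unfolding is_path_def successively_conv_nth by auto

lemma is_path_ends_distinct: "is_path E src tgt u v p \<Longrightarrow> u \<noteq> v"
  by (auto simp: is_path_iff)

lemma is_path_snocD:
  assumes "is_path E src tgt u v (p @ [e])"
  shows "e \<in> E" "set p \<subseteq> E" "tgt e = v" "u \<notin> tgt ` set p" "v \<notin> tgt ` set p"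
    and "src e = (if p = [] then u else tgt (last p))"
  using assms by (auto simp: is_path_iff successively_append_iff)

lemma is_path_snoc_src:
  "is_path E src tgt u v (p @ [e]) \<Longrightarrow> src e \<in> insert u (tgt ` set p)"
  using is_path_snocD(6) by (metis insertCI last_in_set image_eqI)

lemma is_path_prefix:
  "is_path E src tgt u v (xs @ ys) \<Longrightarrow> xs \<noteq> [] \<Longrightarrow> is_path E src tgt u (tgt (last xs)) xs"
  by (auto simp: is_path_iff successively_append_iff)

lemma is_path_snoc:
  "is_path E src tgt u x p \<Longrightarrow> e \<in> E \<Longrightarrow> src e = x \<Longrightarrow> tgt e \<notin> insert u (tgt ` set p)
   \<Longrightarrow> is_path E src tgt u (tgt e) (p @ [e])"
  by (auto simp: is_path_iff successively_append_iff)

lemma is_path_single: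
  "e \<in> E \<Longrightarrow> src e = u \<Longrightarrow> tgt e \<noteq> u \<Longrightarrow> is_path E src tgt u (tgt e) [e]"
  by (auto simp: is_path_iff)

lemma split_at_vertex:
  assumes "z \<in> tgt ` set q"
  obtains xs ys where "q = xs @ ys" "xs \<noteq> []" "tgt (last xs) = z"
proof -
  obtain as e bs where "q = as @ e # bs" "tgt e = z"
    using assms by (auto simp: in_set_conv_decomp)
  then show ?thesis using that[of "as @ [e]" bs] by auto
qed

lemma path_shortcut:
  assumes q: "is_path E src tgt u v (q @ [e'])" and e: "e \<in> E" "tgt e = v"
    and ne: "src e \<noteq> src e'" and on_q: "src e \<in> insert u (tgt ` set q)"
  obtains qa qb where "q = qa @ qb" "qb \<noteq> []" "is_path E src tgt u v (qa @ [e])"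
proof (cases "src e = u")
  case True
  have "q \<noteq> []" using is_path_snocD(6)[OF q] True ne by auto
  moreover have "is_path E src tgt u v ([] @ [e])"
    using is_path_single[of e E src u] e True is_path_ends_distinct[OF q] by auto
  ultimately show ?thesis using that[of "[]" q] by auto
next
  case False
  then obtain qa qb where qs: "q = qa @ qb" "qa \<noteq> []" "tgt (last qa) = src e"
    using on_q split_at_vertex[of "src e" tgt q] by blast
  have "qb \<noteq> []" using qs is_path_snocD(6)[OF q] ne by auto
  moreover have "is_path E src tgt u (src e) qa"
    using is_path_prefix[of E src tgt u v qa "qb @ [e']"] q qs by simp
  then have "is_path E src tgt u (tgt e) (qa @ [e])"
    using e is_path_ends_distinct[OF q] is_path_snocD(5)[OF q] qs by (intro is_path_snoc) auto
  ultimately show ?thesis using that qs e by auto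
qed

section \<open>Colour weights and domination\<close>

lemma colour_weight_append:
  "colour_weight w col c (xs @ ys) = colour_weight w col c xs + colour_weight w col c ys"
  by (simp add: colour_weight_def)

lemma colour_weight_single: "colour_weight w col c [e] = (if col e = c then w e else 0)"
  by (simp add: colour_weight_def)

definition strictly_below :: "('e \<Rightarrow> real) \<Rightarrow> ('e \<Rightarrow> 'c) \<Rightarrow> 'c set \<Rightarrow> 'e list \<Rightarrow> 'e list \<Rightarrow> bool"
where
  "strictly_below w col M q p \<longleftrightarrow>
     path_le w col M q p \<and> (\<exists>c\<in>M. colour_weight w col c q < colour_weight w col c p)"

lemma minimal_path_iff:
  "minimal_path E src tgt w col M u v p \<longleftrightarrow>
     is_path E src tgt u v p \<and> \<not> (\<exists>q. is_path E src tgt u v q \<and> strictly_below w col M q p)"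
  unfolding minimal_path_def strictly_below_def by blast

lemma strictly_below_mono:
  "path_le w col M q' q \<Longrightarrow> strictly_below w col M q p \<Longrightarrow> path_le w col M p p'
   \<Longrightarrow> strictly_below w col M q' p'"
  unfolding strictly_below_def path_le_def by (meson le_less_trans less_le_trans order_trans)

lemma strictly_below_snoc:
  "strictly_below w col M q p \<Longrightarrow> strictly_below w col M (q @ [e]) (p @ [e])"
  by (simp add: strictly_below_def path_le_def colour_weight_append)

locale simple_coloured_graph =
  fixes V :: "'v set" and E :: "'e set" and src tgt :: "'e \<Rightarrow> 'v"
    and w :: "'e \<Rightarrow> real" and col :: "'e \<Rightarrow> 'c" and M :: "'c set"
  assumes graph: "wc_graph V E src tgt w col M"
    and parallel_unique: "\<And>e e'. e \<in> E \<Longrightarrow> e' \<in> E \<Longrightarrow> src e = src e' \<Longrightarrow> tgt e = tgt e'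
      \<Longrightarrow> col e = col e' \<Longrightarrow> e = e'"
begin

lemma weight_pos: "e \<in> E \<Longrightarrow> w e > 0"
  and tgt_in_V: "e \<in> E \<Longrightarrow> tgt e \<in> V"
  and colours: "col ` E = M"
  using graph by (auto simp: wc_graph_def)

lemma colour_weight_nonneg: "set xs \<subseteq> E \<Longrightarrow> 0 \<le> colour_weight w col c xs"
  unfolding colour_weight_def by (rule sum_list_nonneg) (auto dest: weight_pos intro: less_imp_le)

lemma path_le_append: "set ys \<subseteq> E \<Longrightarrow> path_le w col M xs (xs @ ys)"
  by (simp add: path_le_def colour_weight_append colour_weight_nonneg)

lemma weight_le_colour_weight:
  "e \<in> set xs \<Longrightarrow> set xs \<subseteq> E \<Longrightarrow> w e \<le> colour_weight w col (col e) xs"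
proof (induction xs)
  case (Cons a xs)
  have "0 \<le> colour_weight w col (col e) xs" "0 \<le> w a"
    using Cons.prems by (auto intro: colour_weight_nonneg less_imp_le weight_pos)
  with Cons show ?case
    by (auto simp: colour_weight_append[of _ _ _ "[a]", simplified] colour_weight_single)
qed simp

lemma detour_strictly_worse:
  assumes "set (qa @ qb @ [e']) \<subseteq> E" "e \<in> E" "col e = col e'" "w e \<le> w e'" "qb \<noteq> []"
  shows "strictly_below w col M (qa @ [e]) (qa @ qb @ [e'])"
proof -
  have edge_le: "colour_weight w col c [e] \<le> colour_weight w col c [e']" for c
    using assms by (auto simp: colour_weight_single)
  have detour_nonneg: "0 \<le> colour_weight w col c qb" for c
    using assms by (intro colour_weight_nonneg) auto
  let ?c = "col (hd qb)"
  have hd_qb: "hd qb \<in> set qb" "hd qb \<in> E" using assms by auto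
  have "0 < w (hd qb)" using hd_qb weight_pos by blast
  also have "\<dots> \<le> colour_weight w col ?c qb"
    using hd_qb assms by (intro weight_le_colour_weight) auto
  finally have "colour_weight w col ?c (qa @ [e]) < colour_weight w col ?c (qa @ qb @ [e'])"
    using edge_le[of ?c] by (simp add: colour_weight_append)
  moreover have "?c \<in> M" using hd_qb colours by auto
  moreover have "colour_weight w col c (qa @ [e]) \<le> colour_weight w col c (qa @ qb @ [e'])" for c
    using edge_le[of c] detour_nonneg[of c] by (simp add: colour_weight_append)
  ultimately show ?thesis by (auto simp: strictly_below_def path_le_def)
qed

end

section \<open>Entry colours\<close>

definition entry_colours :: "('e \<Rightarrow> 'v) \<Rightarrow> ('e \<Rightarrow> 'c) \<Rightarrow> 'e list \<Rightarrow> 'v \<rightharpoonup> 'c"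
where
  "entry_colours tgt col p = map_of (map (\<lambda>e. (tgt e, col e)) p)"

lemma dom_entry_colours: "dom (entry_colours tgt col p) = tgt ` set p"
  by (simp add: entry_colours_def dom_map_of_conv_image_fst image_image)

lemma entry_colours_snoc:
  assumes "tgt e \<notin> tgt ` set p"
  shows "entry_colours tgt col (p @ [e]) = (entry_colours tgt col p)(tgt e \<mapsto> col e)"
proof -
  have "entry_colours tgt col p (tgt e) = None"
    using assms dom_entry_colours[of tgt col p] by blast
  then show ?thesis by (auto simp: entry_colours_def map_add_def split: option.split)
qed

lemma entry_colours_SomeD: "entry_colours tgt col p z = Some c \<Longrightarrow> c \<in> col ` set p"
  unfolding entry_colours_def by (force dest: map_of_SomeD)

lemma map_upd_cancel:
  assumes "f(a \<mapsto> b) = g(a \<mapsto> b')" "a \<notin> dom f" "a \<notin> dom g"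
  shows "f = g" "b = b'"
proof -
  have "f = (f(a \<mapsto> b))(a := None)" "g = (g(a \<mapsto> b'))(a := None)"
    using assms(2,3) by (auto simp: domIff)
  then show "f = g" using assms(1) by simp
  show "b = b'" using fun_cong[OF assms(1), of a] by simp
qed

section \<open>Minimal paths are determined by their entry colours\<close>

context simple_coloured_graph
begin

text \<open>A proper prefix of a minimal path is minimal: a better path to the end of the prefix
  either avoids v and extends by the last edge, or passes through v and can be cut there.\<close>
lemma minimal_prefix:
  assumes m: "minimal_path E src tgt w col M u v (p @ [e])" and ne: "p \<noteq> []"
  shows "minimal_path E src tgt w col M u (src e) p"
proof -
  have P: "is_path E src tgt u v (p @ [e])" using m by (simp add: minimal_path_iff)
  have p_path: "is_path E src tgt u (src e) p"
    using is_path_prefix[OF P ne] is_path_snocD(6)[OF P] ne by simp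
  have p_le: "path_le w col M p (p @ [e])"
    using is_path_snocD(1)[OF P] by (intro path_le_append) auto
  have better: "\<exists>r. is_path E src tgt u v r \<and> strictly_below w col M r (p @ [e])"
    if q: "is_path E src tgt u (src e) q" and below: "strictly_below w col M q p" for q
  proof (cases "v \<in> tgt ` set q")
    case False
    have "is_path E src tgt u (tgt e) (q @ [e])"
      using q False is_path_snocD(1,3)[OF P] is_path_ends_distinct[OF P]
      by (intro is_path_snoc) auto
    then show ?thesis using strictly_below_snoc[OF below] is_path_snocD(3)[OF P] by auto
  next
    case True
    then obtain qa qb where qs: "q = qa @ qb" "qa \<noteq> []" "tgt (last qa) = v"
      by (rule split_at_vertex)
    have "is_path E src tgt u v qa" using is_path_prefix[of E src tgt u _ qa qb] q qs by simp
    moreover have "path_le w col M qa q"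
      using q qs by (auto simp: is_path_iff intro: path_le_append)
    ultimately show ?thesis using strictly_below_mono[OF _ below p_le] by blast
  qed
  show ?thesis using m p_path better by (auto simp: minimal_path_iff)
qed

lemma shortcut_not_minimal:
  assumes q: "is_path E src tgt u v (q @ [e'])" and e: "e \<in> E" "tgt e = v"
    and ne: "src e \<noteq> src e'" and on_q: "src e \<in> insert u (tgt ` set q)"
    and same_colour: "col e = col e'" and lighter: "w e \<le> w e'"
  shows "\<not> minimal_path E src tgt w col M u v (q @ [e'])"
proof -
  obtain qa qb where qs: "q = qa @ qb" "qb \<noteq> []" and r: "is_path E src tgt u v (qa @ [e])"
    using path_shortcut[OF q e ne on_q] by blast
  have "strictly_below w col M (qa @ [e]) (qa @ qb @ [e'])"
    using is_path_snocD(1,2)[OF q] qs e same_colour lighter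
    by (intro detour_strictly_worse) auto
  then show ?thesis using r qs by (auto simp: minimal_path_iff)
qed

lemma minimal_paths_same_last_edge:
  assumes mp: "minimal_path E src tgt w col M u v (p @ [e])"
    and mq: "minimal_path E src tgt w col M u v (q @ [e'])"
    and same: "entry_colours tgt col (p @ [e]) = entry_colours tgt col (q @ [e'])"
  shows "e = e'" "entry_colours tgt col p = entry_colours tgt col q"
proof -
  have P: "is_path E src tgt u v (p @ [e])" and Q: "is_path E src tgt u v (q @ [e'])"
    using mp mq by (simp_all add: minimal_path_iff)
  have "(entry_colours tgt col p)(v \<mapsto> col e) = (entry_colours tgt col q)(v \<mapsto> col e')"
    using same is_path_snocD(3,5)[OF P] is_path_snocD(3,5)[OF Q] by (simp add: entry_colours_snoc)
  then have prefix: "entry_colours tgt col p = entry_colours tgt col q"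
    and same_colour: "col e = col e'"
    using map_upd_cancel is_path_snocD(5)[OF P] is_path_snocD(5)[OF Q] dom_entry_colours
    by metis+
  have same_vertices: "tgt ` set p = tgt ` set q" using prefix dom_entry_colours by metis
  have "src e = src e'"
  proof (rule ccontr)
    assume ne: "src e \<noteq> src e'"
    show False
    proof (cases "w e \<le> w e'")
      case True
      then show False
        using shortcut_not_minimal[OF Q _ _ ne] is_path_snocD(1,3)[OF P] mq
          is_path_snoc_src[OF P] same_vertices same_colour by auto
    next
      case False
      then show False
        using shortcut_not_minimal[OF P _ _ ne[symmetric]] is_path_snocD(1,3)[OF Q] mp
          is_path_snoc_src[OF Q] same_vertices same_colour by auto
    qed
  qed
  then show "e = e'"
    using parallel_unique is_path_snocD(1,3)[OF P] is_path_snocD(1,3)[OF Q] same_colour by auto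
  show "entry_colours tgt col p = entry_colours tgt col q" by (rule prefix)
qed

lemma minimal_path_entry_colours_inj:
  "minimal_path E src tgt w col M u v p \<Longrightarrow> minimal_path E src tgt w col M u v q
   \<Longrightarrow> entry_colours tgt col p = entry_colours tgt col q \<Longrightarrow> p = q"
proof (induction p arbitrary: v q rule: rev_induct)
  case Nil
  then show ?case by (simp add: minimal_path_iff is_path_iff)
next
  case (snoc e p)
  have "q \<noteq> []" using snoc.prems(2) by (simp add: minimal_path_iff is_path_iff)
  then obtain q' e' where q: "q = q' @ [e']" by (metis rev_exhaust)
  have last: "e = e'" and prefix: "entry_colours tgt col p = entry_colours tgt col q'"
    using minimal_paths_same_last_edge snoc.prems q by blast+
  have "tgt ` set p = tgt ` set q'" using prefix dom_entry_colours by metis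
  then consider "p = []" "q' = []" | "p \<noteq> []" "q' \<noteq> []" by fastforce
  then show ?case
  proof cases
    case 1
    then show ?thesis using q last by simp
  next
    case 2
    have "p = q'"
      using snoc.IH[OF minimal_prefix minimal_prefix prefix] snoc.prems q last 2 by simp
    then show ?thesis using q last by simp
  qed
qed

end

section \<open>Counting\<close>

definition entry_colour_maps :: "'v set \<Rightarrow> 'v \<Rightarrow> 'v \<Rightarrow> 'c set \<Rightarrow> ('v \<rightharpoonup> 'c) set"
where
  "entry_colour_maps V u v M =
     (\<Pi>\<^sub>E z\<in>V - {u}. if z = v then Some ` M else insert None (Some ` M))"

text \<open>k choices at v and k + 1 choices at each of the other n - 2 vertices.\<close>
lemma card_entry_colour_maps:
  assumes "finite V" "finite M" "u \<in> V" "v \<in> V" "u \<noteq> v"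
  shows "card (entry_colour_maps V u v M) = card M * (card M + 1) ^ (card V - 2)"
proof -
  let ?B = "\<lambda>z. if z = v then Some ` M else insert None (Some ` M)"
  have card_colours: "card (Some ` M) = card M" "card (insert None (Some ` M)) = card M + 1"
    using assms(2) by (simp_all add: card_image)
  have "card (entry_colour_maps V u v M) = (\<Prod>z\<in>V - {u}. card (?B z))"
    using assms(1) by (simp add: entry_colour_maps_def card_PiE)
  also have "\<dots> = card (?B v) * (\<Prod>z\<in>V - {u} - {v}. card (?B z))"
    using assms by (intro prod.remove) auto
  also have "\<dots> = card M * (card M + 1) ^ card (V - {u} - {v})"
    using card_colours by simp
  also have "card (V - {u} - {v}) = card V - 2"
    using assms by (simp add: card_Diff_singleton)
  finally show ?thesis .
qed

context simple_coloured_graph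
begin

lemma minimal_path_entry_colours:
  assumes "minimal_path E src tgt w col M u v p"
  shows "z \<notin> V - {u} \<Longrightarrow> entry_colours tgt col p z = None"
    and "restrict (entry_colours tgt col p) (V - {u}) \<in> entry_colour_maps V u v M"
proof -
  have P: "is_path E src tgt u v p" using assms by (simp add: minimal_path_iff)
  have edges: "set p \<subseteq> E" and u_not_entered: "u \<notin> tgt ` set p" and v_entered: "v \<in> tgt ` set p"
    using P by (auto simp: is_path_iff)
  have vertices: "tgt ` set p \<subseteq> V - {u}" using edges tgt_in_V u_not_entered by auto
  show "z \<notin> V - {u} \<Longrightarrow> entry_colours tgt col p z = None"
    using vertices dom_entry_colours[of tgt col p] by blast
  have "entry_colours tgt col p z \<in> (if z = v then Some ` M else insert None (Some ` M))" for z
  proof (cases "entry_colours tgt col p z")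
    case None
    then show ?thesis using v_entered dom_entry_colours[of tgt col p] by auto
  next
    case (Some c)
    then have "c \<in> M" using entry_colours_SomeD[OF Some] edges colours by blast
    then show ?thesis using Some by simp
  qed
  then show "restrict (entry_colours tgt col p) (V - {u}) \<in> entry_colour_maps V u v M"
    by (simp add: entry_colour_maps_def)
qed

lemma card_minimal_paths_le:
  assumes "finite V" "finite M"
  shows "card {p. minimal_path E src tgt w col M u v p} \<le> card (entry_colour_maps V u v M)"
proof (rule card_inj_on_le)
  let ?code = "\<lambda>p. restrict (entry_colours tgt col p) (V - {u})"
  show "inj_on ?code {p. minimal_path E src tgt w col M u v p}"
  proof (rule inj_onI)
    fix p q
    assume p: "p \<in> {p. minimal_path E src tgt w col M u v p}"
      and q: "q \<in> {p. minimal_path E src tgt w col M u v p}" and eq: "?code p = ?code q"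
    have "entry_colours tgt col p = entry_colours tgt col q"
    proof
      fix z show "entry_colours tgt col p z = entry_colours tgt col q z"
        using fun_cong[OF eq, of z] minimal_path_entry_colours(1) p q
        by (cases "z \<in> V - {u}") auto
    qed
    then show "p = q" using p q minimal_path_entry_colours_inj by blast
  qed
  show "?code ` {p. minimal_path E src tgt w col M u v p} \<subseteq> entry_colour_maps V u v M"
    using minimal_path_entry_colours(2) by blast
  show "finite (entry_colour_maps V u v M)"
    using assms unfolding entry_colour_maps_def by (intro finite_PiE) auto
qed

end

theorem theorem3:
  fixes V :: "'v set" and E :: "'e set" and src tgt :: "'e \<Rightarrow> 'v"
    and w :: "'e \<Rightarrow> real" and col :: "'e \<Rightarrow> 'c" and M :: "'c set"
    and u v :: 'v
  assumes "finite_wc_graph V E src tgt w col M"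
    and "card V \<ge> 2"
    and "\<forall>e\<in>E. \<forall>e'\<in>E. src e = src e' \<and> tgt e = tgt e' \<and> col e = col e' \<longrightarrow> e = e'"
    and "u \<in> V" and "v \<in> V" and "u \<noteq> v"
  shows "card {p. minimal_path E src tgt w col M u v p} \<le> card M * (card M + 1) ^ (card V - 2)"
proof -
  interpret simple_coloured_graph V E src tgt w col M
    using assms(1,3) by unfold_locales (auto simp: finite_wc_graph_def)
  have "finite V" "finite M"
    using assms(1) colours by (auto simp: finite_wc_graph_def)
  then have "card {p. minimal_path E src tgt w col M u v p} \<le> card (entry_colour_maps V u v M)"
    by (rule card_minimal_paths_le)
  also have "\<dots> = card M * (card M + 1) ^ (card V - 2)"
    using \<open>finite V\<close> \<open>finite M\<close> assms(4-6) by (rule card_entry_colour_maps)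
  finally show ?thesis .
qed

end
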